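(* In the setting below, let $I=\{i_A,\dots,i_B\}\subseteq\{0,\dots,n\}$ and $J=\{j_A,\dots,j_B\}\subseteq\{0,\dots,m\}$ be intervals of equal length $|I|=|J|$ such that every point of $I\times J$ is $2\Delta$-relevant. Then there are $a,b,c\in\mathbb{R}$ such that $|f(i)-(a i+b)|\le 2\Delta$ for all $i\in I$ and $|g(j)-(aj+c)|\le 2\Delta$ for all $j\in J$.
   Context: Setting: $f\colon\{0,\dots,n\}\to\mathbb{Z}$, $g\colon\{0,\dots,m\}\to\mathbb{Z}$, and convex functions $\breve f\colon\{0,\dots,n\}\to\mathbb{Q}$, $\breve g\colon\{0,\dots,m\}\to\mathbb{Q}$ (convex: $F(i)-F(i-1)\le F(i+1)-F(i)$ for interior $i$) with $\breve f\le f\le\breve f+\Delta$ and $\breve g\le g\le\breve g+\Delta$ pointwise, for some $\Delta\ge0$. Let $\breve h(k)=\min_{i+j=k}\breve f(i)+\breve g(j)$. A point $(i,j)$ is $\delta$-relevant if $\breve f(i)+\breve g(j)\le\breve h(i+j)+\delta$. *)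

theory Defs
  imports "HOL-Analysis.Analysis"
begin

definition convex_on_upto :: "nat \<Rightarrow> (nat \<Rightarrow> rat) \<Rightarrow> bool" where
  "convex_on_upto n F \<longleftrightarrow>
     (\<forall>i. 0 < i \<and> i < n \<longrightarrow> F i - F (i - 1) \<le> F (i + 1) - F i)"

definition minplus_conv :: "nat \<Rightarrow> nat \<Rightarrow> (nat \<Rightarrow> rat) \<Rightarrow> (nat \<Rightarrow> rat) \<Rightarrow> nat \<Rightarrow> rat" where
  "minplus_conv n m F G k = Min {F i + G j | i j. i \<le> n \<and> j \<le> m \<and> i + j = k}"

definition relevant :: "nat \<Rightarrow> nat \<Rightarrow> (nat \<Rightarrow> rat) \<Rightarrow> (nat \<Rightarrow> rat) \<Rightarrow> rat \<Rightarrow> nat \<Rightarrow> nat \<Rightarrow> bool" where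
  "relevant n m F G \<delta> i j \<longleftrightarrow> F i + G j \<le> minplus_conv n m F G (i + j) + \<delta>"

end

theory Submission
  imports Defs
begin

text \<open>Walk along the anti-diagonal i + j = iA + jB through I \<times> J and let (p, q) minimise
  fb i + gb j on it. Minimality makes the one-sided slopes of fb at p and of gb at q
  interleave, so the two convex functions have a common supporting slope a there: both
  fb i - a i and gb j - a j are minimal at p and q. Conversely, relevance of (i, j) compared
  with the point (p, q) on the same anti-diagonal bounds the sum of the two tilted
  functions by its value at (p, q) plus 2\<Delta>, so each tilted function varies by at most
  2\<Delta>. Since f lies within \<Delta> above fb, f i - a i ranges over an interval of length
  3\<Delta>, and its midpoint gives the fit.\<close>

lemma minplus_conv_le:
  assumes "i \<le> n" "j \<le> m"
  shows "minplus_conv n m F G (i + j) \<le> F i + G j"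
proof -
  have "{F i' + G j' | i' j'. i' \<le> n \<and> j' \<le> m \<and> i' + j' = i + j}
          \<subseteq> (\<lambda>(i', j'). F i' + G j') ` ({..n} \<times> {..m})"
    by auto
  then have "finite {F i' + G j' | i' j'. i' \<le> n \<and> j' \<le> m \<and> i' + j' = i + j}"
    by (rule finite_subset) simp
  then show ?thesis
    unfolding minplus_conv_def by (rule Min_le) (use assms in auto)
qed

lemma relevant_tilted_le:
  assumes "relevant n m F G \<delta> i j" "p \<le> n" "q \<le> m" "p + q = i + j"
  shows "(F i - a * of_nat i) + (G j - a * of_nat j) \<le> (F p - a * of_nat p) + (G q - a * of_nat q) + \<delta>"
proof -
  have "F i + G j \<le> F p + G q + \<delta>"
    using assms minplus_conv_le[of p n q m F G] unfolding relevant_def by simp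
  moreover have "a * of_nat i + a * of_nat j = a * of_nat p + a * (of_nat q :: rat)"
    using assms(4) by (metis distrib_left of_nat_add)
  ultimately show ?thesis by linarith
qed

lemma convex_on_upto_slope_mono:
  assumes "convex_on_upto n F" "p \<le> k" "k < n"
  shows "F (p + 1) - F p \<le> F (k + 1) - F k"
  using assms(2,3)
proof (induction rule: dec_induct)
  case (step k)
  then have "F (Suc k) - F k \<le> F (Suc k + 1) - F (Suc k)"
    using assms(1) unfolding convex_on_upto_def by (metis diff_Suc_1 zero_less_Suc)
  with step show ?case by simp
qed simp

lemma convex_on_upto_support_right:
  assumes "convex_on_upto n F" "p \<le> i" "i \<le> n" "p < i \<Longrightarrow> a \<le> F (p + 1) - F p"
  shows "F p - a * of_nat p \<le> F i - a * of_nat i"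
  using assms(2,3)
proof (induction rule: dec_induct)
  case (step k)
  have "a \<le> F (k + 1) - F k"
    using assms(4) step convex_on_upto_slope_mono[OF assms(1), of p k] by force
  with step show ?case by (simp add: algebra_simps)
qed simp

lemma convex_on_upto_support_left:
  assumes "convex_on_upto n F" "i \<le> p" "p \<le> n" "i < p \<Longrightarrow> F p - F (p - 1) \<le> a"
  shows "F p - a * of_nat p \<le> F i - a * of_nat i"
  using assms(2)
proof (induction rule: inc_induct)
  case (step k)
  have "F (k + 1) - F k \<le> F (p - 1 + 1) - F (p - 1)"
    using convex_on_upto_slope_mono[OF assms(1), of k "p - 1"] step assms(3) by simp
  also have "\<dots> \<le> a"
    using assms(4) step by simp
  finally show ?case
    using step by (simp add: algebra_simps)
qed simp

definition subgradient_at :: "nat \<Rightarrow> nat \<Rightarrow> (nat \<Rightarrow> rat) \<Rightarrow> nat \<Rightarrow> rat \<Rightarrow> bool" where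
  "subgradient_at lo hi F p a \<longleftrightarrow>
     (lo < p \<longrightarrow> F p - F (p - 1) \<le> a) \<and> (p < hi \<longrightarrow> a \<le> F (p + 1) - F p)"

lemma convex_on_upto_subgradient_support:
  assumes "convex_on_upto n F" "hi \<le> n" "p \<in> {lo..hi}" "i \<in> {lo..hi}" "subgradient_at lo hi F p a"
  shows "F p - a * of_nat p \<le> F i - a * of_nat i"
proof (cases "p \<le> i")
  case True
  then show ?thesis
    using assms convex_on_upto_support_right[OF assms(1)] unfolding subgradient_at_def by auto
next
  case False
  then show ?thesis
    using assms convex_on_upto_support_left[OF assms(1)] unfolding subgradient_at_def by auto
qed

lemma crossed_intervals_meet:
  fixes l1 r1 l2 r2 :: "'a::linorder"
  assumes "P \<Longrightarrow> l1 \<le> r2" "Q \<Longrightarrow> l2 \<le> r1" "P \<Longrightarrow> Q \<Longrightarrow> l1 \<le> r1" "P \<Longrightarrow> Q \<Longrightarrow> l2 \<le> r2"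
  shows "\<exists>a. (P \<longrightarrow> l1 \<le> a \<and> a \<le> r2) \<and> (Q \<longrightarrow> l2 \<le> a \<and> a \<le> r1)"
proof (cases P)
  case True
  then show ?thesis
    using assms by (intro exI[of _ "if Q then max l1 l2 else l1"]) auto
next
  case False
  then show ?thesis
    using assms by (intro exI[of _ l2]) auto
qed

lemma antidiagonal_common_subgradient:
  assumes convF: "convex_on_upto n F" and convG: "convex_on_upto m G"
    and I: "iA \<le> iB" "iB \<le> n" and J: "jA \<le> jB" "jB \<le> m" and same_len: "iB - iA = jB - jA"
  obtains p q a where "p \<in> {iA..iB}" "q \<in> {jA..jB}" "p + q = iA + jB"
    "subgradient_at iA iB F p a" "subgradient_at jA jB G q a"
proof -
  define S where "S = iA + jB"
  define \<phi> where "\<phi> i = F i + G (S - i)" for i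
  obtain p where p: "p \<in> {iA..iB}" and p_min: "\<And>i. i \<in> {iA..iB} \<Longrightarrow> \<phi> p \<le> \<phi> i"
    using Min_in[of "\<phi> ` {iA..iB}"] Min_le[of "\<phi> ` {iA..iB}"] I by fastforce
  define q where "q = S - p"
  have q: "q \<in> {jA..jB}" "p + q = S" and q_pos: "iA < p \<longleftrightarrow> q < jB" "p < iB \<longleftrightarrow> jA < q"
    using p I J same_len unfolding q_def S_def by auto
  have left: "F p - F (p - 1) \<le> G (q + 1) - G q" if "iA < p"
  proof -
    have "\<phi> p \<le> \<phi> (p - 1)"
      using that p by (intro p_min) auto
    moreover have "S - (p - 1) = q + 1"
      using that q by auto
    ultimately show ?thesis
      unfolding \<phi>_def q_def[symmetric] by simp
  qed
  have right: "G q - G (q - 1) \<le> F (p + 1) - F p" if "p < iB"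
  proof -
    have "\<phi> p \<le> \<phi> (p + 1)"
      using that p by (intro p_min) auto
    moreover have "S - (p + 1) = q - 1"
      using that q by auto
    ultimately show ?thesis
      unfolding \<phi>_def q_def[symmetric] by simp
  qed
  have "F p - F (p - 1) \<le> F (p + 1) - F p" if "iA < p" "p < iB"
    using convF that I unfolding convex_on_upto_def by auto
  moreover have "G q - G (q - 1) \<le> G (q + 1) - G q" if "iA < p" "p < iB"
    using convG that q_pos J unfolding convex_on_upto_def by auto
  ultimately obtain a
    where "iA < p \<longrightarrow> F p - F (p - 1) \<le> a \<and> a \<le> G (q + 1) - G q"
      and "p < iB \<longrightarrow> G q - G (q - 1) \<le> a \<and> a \<le> F (p + 1) - F p"
    using crossed_intervals_meet[of "iA < p" "F p - F (p - 1)" "G (q + 1) - G q" "p < iB"]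
      left right by blast
  then show ?thesis
    using that[of p q a] p q q_pos unfolding subgradient_at_def S_def by auto
qed

lemma affine_fit_of_sandwich:
  fixes y a L \<Delta> :: rat and x :: int and k :: nat
  assumes "L \<le> y - a * of_nat k" "y - a * of_nat k \<le> L + 2 * \<Delta>"
    and "y \<le> of_int x" "of_int x \<le> y + \<Delta>"
  shows "\<bar>real_of_int x - (real_of_rat a * real k + real_of_rat (L + 3/2 * \<Delta>))\<bar> \<le> 2 * real_of_rat \<Delta>"
proof -
  have "\<bar>of_int x - (a * of_nat k + (L + 3/2 * \<Delta>))\<bar> \<le> 2 * \<Delta>"
    using assms by (simp add: abs_le_iff)
  then have "real_of_rat \<bar>of_int x - (a * of_nat k + (L + 3/2 * \<Delta>))\<bar> \<le> real_of_rat (2 * \<Delta>)"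
    by (simp only: of_rat_less_eq)
  then show ?thesis
    by (simp only: abs_of_rat[symmetric] of_rat_add of_rat_diff of_rat_mult of_rat_of_int_eq
        of_rat_of_nat_eq of_rat_numeral_eq)
qed

lemma relevant_block_tilted_sandwich:
  assumes convF: "convex_on_upto n F" and convG: "convex_on_upto m G"
    and I: "iA \<le> iB" "iB \<le> n" and J: "jA \<le> jB" "jB \<le> m" and same_len: "iB - iA = jB - jA"
    and rel: "\<And>i j. i \<in> {iA..iB} \<Longrightarrow> j \<in> {jA..jB} \<Longrightarrow> relevant n m F G \<delta> i j"
  obtains a L K where
    "\<And>i. i \<in> {iA..iB} \<Longrightarrow> L \<le> F i - a * of_nat i \<and> F i - a * of_nat i \<le> L + \<delta>"
    "\<And>j. j \<in> {jA..jB} \<Longrightarrow> K \<le> G j - a * of_nat j \<and> G j - a * of_nat j \<le> K + \<delta>"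
proof -
  obtain p q a where p: "p \<in> {iA..iB}" and q: "q \<in> {jA..jB}" and pq: "p + q = iA + jB"
    and subF: "subgradient_at iA iB F p a" and subG: "subgradient_at jA jB G q a"
    using antidiagonal_common_subgradient[OF convF convG I J same_len] by blast
  define \<phi> where "\<phi> i = F i - a * of_nat i" for i
  define \<psi> where "\<psi> j = G j - a * of_nat j" for j
  have \<phi>_min: "\<phi> p \<le> \<phi> i" and \<psi>_min: "\<psi> q \<le> \<psi> j" if "i \<in> {iA..iB}" "j \<in> {jA..jB}" for i j
    using that convex_on_upto_subgradient_support[OF convF I(2) p _ subF]
      convex_on_upto_subgradient_support[OF convG J(2) q _ subG]
    unfolding \<phi>_def \<psi>_def by auto
  have tilted: "\<phi> i + \<psi> j \<le> \<phi> p + \<psi> q + \<delta>"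
    if "i \<in> {iA..iB}" "j \<in> {jA..jB}" "i + j = p + q" for i j
    using relevant_tilted_le[OF rel[OF that(1,2)], of p q] p q that I J
    unfolding \<phi>_def \<psi>_def by auto
  have \<phi>_max: "\<phi> i \<le> \<phi> p + \<delta>" if i: "i \<in> {iA..iB}" for i
  proof -
    have j: "iA + jB - i \<in> {jA..jB}" and ij: "i + (iA + jB - i) = p + q"
      using i pq I J same_len by auto
    show ?thesis
      using tilted[OF i j ij] \<psi>_min[OF i j] by linarith
  qed
  have \<psi>_max: "\<psi> j \<le> \<psi> q + \<delta>" if j: "j \<in> {jA..jB}" for j
  proof -
    have i: "iA + jB - j \<in> {iA..iB}" and ij: "(iA + jB - j) + j = p + q"
      using j pq I J same_len by auto
    show ?thesis
      using tilted[OF i j ij] \<phi>_min[OF i j] by linarith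
  qed
  show ?thesis
  proof (rule that)
    show "\<phi> p \<le> F i - a * of_nat i \<and> F i - a * of_nat i \<le> \<phi> p + \<delta>" if "i \<in> {iA..iB}" for i
      using \<phi>_min[OF that q] \<phi>_max[OF that] unfolding \<phi>_def by simp
    show "\<psi> q \<le> G j - a * of_nat j \<and> G j - a * of_nat j \<le> \<psi> q + \<delta>" if "j \<in> {jA..jB}" for j
      using \<psi>_min[OF p that] \<psi>_max[OF that] unfolding \<psi>_def by simp
  qed
qed

theorem mainTheorem14:
  fixes f g :: "nat \<Rightarrow> int" and fb gb :: "nat \<Rightarrow> rat" and n m :: nat and \<Delta> :: rat
    and iA iB jA jB :: nat
  assumes convf: "convex_on_upto n fb" and convg: "convex_on_upto m gb"
    and Delta_nonneg: "\<Delta> \<ge> 0"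
    and f_lo: "\<And>i. i \<le> n \<Longrightarrow> fb i \<le> of_int (f i)"
    and f_hi: "\<And>i. i \<le> n \<Longrightarrow> of_int (f i) \<le> fb i + \<Delta>"
    and g_lo: "\<And>j. j \<le> m \<Longrightarrow> gb j \<le> of_int (g j)"
    and g_hi: "\<And>j. j \<le> m \<Longrightarrow> of_int (g j) \<le> gb j + \<Delta>"
    and I_sub: "iA \<le> iB" "iB \<le> n"
    and J_sub: "jA \<le> jB" "jB \<le> m"
    and same_len: "iB - iA = jB - jA"
    and rel: "\<And>i j. i \<in> {iA..iB} \<Longrightarrow> j \<in> {jA..jB} \<Longrightarrow> relevant n m fb gb (2 * \<Delta>) i j"
  shows "\<exists>a b c :: real.
           (\<forall>i\<in>{iA..iB}. \<bar>real_of_int (f i) - (a * real i + b)\<bar> \<le> 2 * real_of_rat \<Delta>) \<and>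
           (\<forall>j\<in>{jA..jB}. \<bar>real_of_int (g j) - (a * real j + c)\<bar> \<le> 2 * real_of_rat \<Delta>)"
proof -
  obtain a L K where
    fit_f: "\<And>i. i \<in> {iA..iB} \<Longrightarrow> L \<le> fb i - a * of_nat i \<and> fb i - a * of_nat i \<le> L + 2 * \<Delta>" and
    fit_g: "\<And>j. j \<in> {jA..jB} \<Longrightarrow> K \<le> gb j - a * of_nat j \<and> gb j - a * of_nat j \<le> K + 2 * \<Delta>"
    using relevant_block_tilted_sandwich[OF convf convg I_sub J_sub same_len, of "2 * \<Delta>"] rel
    by metis
  show ?thesis
  proof (intro exI conjI ballI)
    fix i assume i: "i \<in> {iA..iB}"
    then show "\<bar>real_of_int (f i) - (of_rat a * real i + of_rat (L + 3/2 * \<Delta>))\<bar> \<le> 2 * of_rat \<Delta>"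
      using fit_f[OF i] f_lo[of i] f_hi[of i] I_sub by (intro affine_fit_of_sandwich) auto
  next
    fix j assume j: "j \<in> {jA..jB}"
    then show "\<bar>real_of_int (g j) - (of_rat a * real j + of_rat (K + 3/2 * \<Delta>))\<bar> \<le> 2 * of_rat \<Delta>"
      using fit_g[OF j] g_lo[of j] g_hi[of j] J_sub by (intro affine_fit_of_sandwich) auto
  qed
qed

end
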